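(* For sufficiently large $n$, $$R(\mathcal{J},Q_n)\le R(\mathcal{SD}_{1,2},Q_n)\le n+\frac{(2+o(1))\,n}{\log n}.$$
   Context: A copy of a poset $P$ in a poset $P_1$ is an induced subposet of $P_1$ isomorphic to $P$. $Q_n$ is the Boolean lattice of all subsets of an $n$-element set ordered by inclusion. $R(P_1,P_2)$ is the smallest $N$ such that every blue/red coloring of the elements of $Q_N$ contains an all-blue copy of $P_1$ or an all-red copy of $P_2$. The poset $\mathcal{J}$ has four distinct elements $A,B,C,D$ with $B\le C\le D$, $B\le A$, $A$ incomparable to $C$, and $A$ incomparable to $D$ (and no other relations besides those implied). $\mathcal{SD}_{s,t}$ is the poset obtained from two disjoint, mutually element-wise incomparable chains of lengths $s$ and $t$ by adding a common minimum element and a common maximum element. $\log$ is base $2$; $o(1)\to0$ as $n\to\infty$. *)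

theory Defs
  imports Complex_Main
begin

definition has_copy :: "'a set \<Rightarrow> ('a \<Rightarrow> 'a \<Rightarrow> bool) \<Rightarrow> nat set set \<Rightarrow> bool" where
  "has_copy X le S \<longleftrightarrow>
     (\<exists>f. inj_on f X \<and> f ` X \<subseteq> S \<and> (\<forall>x\<in>X. \<forall>y\<in>X. le x y \<longleftrightarrow> f x \<subseteq> f y))"

definition Q :: "nat \<Rightarrow> nat set set" where
  "Q N = Pow {..<N}"

text \<open>Every blue/red colouring of Q_N (True = blue) contains a blue copy of P1 or a red copy of P2.\<close>
definition ramsey_prop ::
  "'a set \<Rightarrow> ('a \<Rightarrow> 'a \<Rightarrow> bool) \<Rightarrow> 'b set \<Rightarrow> ('b \<Rightarrow> 'b \<Rightarrow> bool) \<Rightarrow> nat \<Rightarrow> bool" where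
  "ramsey_prop X1 le1 X2 le2 N \<longleftrightarrow>
     (\<forall>c :: nat set \<Rightarrow> bool.
        has_copy X1 le1 {A \<in> Q N. c A} \<or> has_copy X2 le2 {A \<in> Q N. \<not> c A})"

definition poset_ramsey ::
  "'a set \<Rightarrow> ('a \<Rightarrow> 'a \<Rightarrow> bool) \<Rightarrow> 'b set \<Rightarrow> ('b \<Rightarrow> 'b \<Rightarrow> bool) \<Rightarrow> nat" where
  "poset_ramsey X1 le1 X2 le2 = (LEAST N. ramsey_prop X1 le1 X2 le2 N)"

text \<open>The poset J on {0,1,2,3}, with A = 0, B = 1, C = 2, D = 3:
  B \<le> C \<le> D, B \<le> A, plus reflexivity and transitivity.\<close>
definition J_carrier :: "nat set" where
  "J_carrier = {0, 1, 2, 3}"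

definition J_le :: "nat \<Rightarrow> nat \<Rightarrow> bool" where
  "J_le x y \<longleftrightarrow> x = y \<or> (x = 1 \<and> y \<in> {0, 2, 3}) \<or> (x = 2 \<and> y = 3)"

text \<open>SD_{s,t}: two disjoint mutually incomparable chains with s and t elements,
  plus a common minimum and a common maximum.\<close>
datatype sd_elem = SBot | STop | SL nat | SR nat

definition SD_carrier :: "nat \<Rightarrow> nat \<Rightarrow> sd_elem set" where
  "SD_carrier s t = {SBot, STop} \<union> SL ` {..<s} \<union> SR ` {..<t}"

fun SD_le :: "sd_elem \<Rightarrow> sd_elem \<Rightarrow> bool" where
  "SD_le SBot y = True"
| "SD_le x STop = True"
| "SD_le (SL i) (SL j) = (i \<le> j)"
| "SD_le (SR i) (SR j) = (i \<le> j)"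
| "SD_le _ _ = False"

end

theory Submission
  imports Defs "HOL-Combinatorics.Multiset_Permutations" "HOL-Real_Asymp.Real_Asymp"
begin

text \<open>
  Colour the cube \<open>Q\<^sub>n\<^sub>+\<^sub>k\<close>, split as \<open>Q\<^sub>n \<times> Q\<^sub>k\<close>, without a red copy of \<open>Q\<^sub>n\<close>.
  For every permutation \<open>\<pi>\<close> of the last \<open>k\<close> coordinates, let \<open>Y\<^sub>0 \<subset> \<dots> \<subset> Y\<^sub>k\<close> be the chain of
  its prefixes. A greedy argument shows that there is a chain \<open>T\<^sub>0 \<subseteq> \<dots> \<subseteq> T\<^sub>k\<close> in \<open>Q\<^sub>n\<close>
  with all \<open>T\<^sub>l \<union> Y\<^sub>l\<close> blue; otherwise the first index where the chain breaks down
  defines a red copy of \<open>Q\<^sub>n\<close>. If \<open>k! > 2\<^sup>k 4\<^sup>n\<close>, two distinct permutations share their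
  ascent set and the endpoints \<open>T\<^sub>0, T\<^sub>k\<close> of their blue chains; at the first position where
  the permutations differ, five of the sets of the two chains form a blue \<open>SD\<^sub>1\<^sub>,\<^sub>2\<close>,
  which contains \<open>J\<close>. Stirling's bound \<open>k! \<ge> (k/e)\<^sup>k\<close> makes \<open>k \<approx> (2 + \<epsilon>) n / log n\<close>
  large enough.
\<close>

lemma has_copy_trans:
  assumes "has_copy Y leY S" and "inj_on g X" and "g ` X \<subseteq> Y"
    and "\<And>x y. x \<in> X \<Longrightarrow> y \<in> X \<Longrightarrow> le x y \<longleftrightarrow> leY (g x) (g y)"
  shows "has_copy X le S"
proof -
  obtain f where f: "inj_on f Y" "f ` Y \<subseteq> S" "\<forall>x\<in>Y. \<forall>y\<in>Y. leY x y \<longleftrightarrow> f x \<subseteq> f y"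
    using assms(1) unfolding has_copy_def by blast
  have "inj_on (f \<circ> g) X"
    using comp_inj_on[OF assms(2)] f(1) assms(3) inj_on_subset by blast
  moreover have "(f \<circ> g) ` X \<subseteq> S"
    using assms(3) f(2) by auto
  moreover have "\<forall>x\<in>X. \<forall>y\<in>X. le x y \<longleftrightarrow> (f \<circ> g) x \<subseteq> (f \<circ> g) y"
    using assms(3,4) f(3) by (simp add: image_subset_iff)
  ultimately show ?thesis
    unfolding has_copy_def by blast
qed

lemma SD12_carrier: "SD_carrier 1 2 = {SBot, STop, SL 0, SR 0, SR 1}"
  unfolding SD_carrier_def by (auto simp: lessThan_Suc)

lemma has_copy_J_if_SD12:
  assumes "has_copy (SD_carrier 1 2) SD_le S"
  shows "has_copy J_carrier J_le S"
proof (rule has_copy_trans[OF assms])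
  define g where "g i = (if i = 0 then SL 0 else if i = 1 then SBot else if i = 2 then SR 0 else SR 1)"
    for i :: nat
  show "inj_on g J_carrier" "g ` J_carrier \<subseteq> SD_carrier 1 2"
    unfolding SD12_carrier g_def J_carrier_def inj_on_def by auto
  show "J_le x y \<longleftrightarrow> SD_le (g x) (g y)" if "x \<in> J_carrier" "y \<in> J_carrier" for x y
    using that unfolding J_carrier_def J_le_def g_def by auto
qed

lemma SD_le_antisym: "SD_le x y \<Longrightarrow> SD_le y x \<Longrightarrow> x = y"
  by (cases x; cases y) auto

text \<open>\<open>B\<close> and \<open>T\<close> are the bottom and top, \<open>R0 \<subseteq> R1\<close> the two-element chain and \<open>L\<close> the
  one-element chain; the three non-inclusions imply all the others.\<close>

lemma has_copy_SD12I:
  assumes "B \<subseteq> L" "B \<subseteq> R0" "R0 \<subseteq> R1" "R1 \<subseteq> T" "L \<subseteq> T"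
    and "\<not> L \<subseteq> R1" "\<not> R0 \<subseteq> L" "\<not> R1 \<subseteq> R0"
    and "{B, L, R0, R1, T} \<subseteq> S"
  shows "has_copy (SD_carrier 1 2) SD_le S"
proof -
  define f where "f x = (case x of SBot \<Rightarrow> B | STop \<Rightarrow> T | SL _ \<Rightarrow> L | SR i \<Rightarrow> if i = 0 then R0 else R1)"
    for x
  have incomparable: "\<not> L \<subseteq> B" "\<not> R0 \<subseteq> B" "\<not> R1 \<subseteq> B" "\<not> T \<subseteq> B" "\<not> L \<subseteq> R0"
    "\<not> R1 \<subseteq> L" "\<not> T \<subseteq> L" "\<not> T \<subseteq> R0" "\<not> T \<subseteq> R1"
    using assms(1-8) by blast+
  have "\<forall>x\<in>SD_carrier 1 2. \<forall>y\<in>SD_carrier 1 2. SD_le x y \<longleftrightarrow> f x \<subseteq> f y"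
    unfolding SD12_carrier f_def using assms(1-8) incomparable by auto
  moreover from this have "inj_on f (SD_carrier 1 2)"
    using SD_le_antisym by (metis inj_onI subset_refl)
  moreover have "f ` SD_carrier 1 2 \<subseteq> S"
    unfolding SD12_carrier f_def using assms(9) by auto
  ultimately show ?thesis
    unfolding has_copy_def by blast
qed

lemma poset_ramsey_le:
  "ramsey_prop X le Z leZ N \<Longrightarrow> poset_ramsey X le Z leZ \<le> N"
  unfolding poset_ramsey_def by (rule Least_le)

lemma poset_ramsey_mono:
  assumes "\<And>N. ramsey_prop X le Z leZ N \<Longrightarrow> ramsey_prop X' le' Z leZ N"
    and "ramsey_prop X le Z leZ N"
  shows "poset_ramsey X' le' Z leZ \<le> poset_ramsey X le Z leZ"
proof (rule poset_ramsey_le, rule assms(1))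
  show "ramsey_prop X le Z leZ (poset_ramsey X le Z leZ)"
    unfolding poset_ramsey_def using assms(2) by (rule LeastI)
qed

lemma ramsey_prop_J_if_SD12:
  "ramsey_prop (SD_carrier 1 2) SD_le Z leZ N \<Longrightarrow> ramsey_prop J_carrier J_le Z leZ N"
  unfolding ramsey_prop_def using has_copy_J_if_SD12 by blast

section \<open>Blue chains above a chain of the second factor\<close>

definition blue_chain ::
  "(nat set \<Rightarrow> bool) \<Rightarrow> (nat \<Rightarrow> nat set) \<Rightarrow> nat set \<Rightarrow> nat \<Rightarrow> (nat \<Rightarrow> nat set) \<Rightarrow> bool" where
  "blue_chain c Y S i T \<longleftrightarrow> (\<forall>l<i. T l \<subseteq> T (Suc l)) \<and> (\<forall>l\<le>i. T l \<subseteq> S \<and> c (T l \<union> Y l))"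

lemma blue_chain_mono:
  "blue_chain c Y S i T \<Longrightarrow> l \<le> l' \<Longrightarrow> l' \<le> i \<Longrightarrow> T l \<subseteq> T l'"
  unfolding blue_chain_def by (rule lift_Suc_mono_le_ivl[of "{..<i}"]) auto

lemma blue_chain_0: "c (S \<union> Y 0) \<Longrightarrow> blue_chain c Y S 0 (\<lambda>_. S)"
  unfolding blue_chain_def by simp

lemma blue_chain_superset: "blue_chain c Y S i T \<Longrightarrow> S \<subseteq> S' \<Longrightarrow> blue_chain c Y S' i T"
  unfolding blue_chain_def by blast

lemma blue_chain_Suc:
  assumes "blue_chain c Y S m T" and "c (S \<union> Y (Suc m))"
  shows "blue_chain c Y S (Suc m) (T(Suc m := S))"
  using assms unfolding blue_chain_def by (auto simp: less_Suc_eq le_Suc_eq)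

text \<open>If no blue chain of length \<open>k\<close> lies below \<open>{..<n}\<close>, then \<open>S \<mapsto> S \<union> Y (h S)\<close> is a red
  copy of \<open>Q\<^sub>n\<close>, where \<open>h S\<close> is the least length of a chain below \<open>S\<close> that cannot be built.
  It is red because a chain of length \<open>h S - 1\<close> could otherwise be extended by \<open>S\<close>
  itself, and an embedding because \<open>h\<close> is monotone and \<open>Y\<close> lives on coordinates \<open>\<ge> n\<close>.\<close>

lemma red_cube_or_blue_chain:
  assumes Y: "mono Y" "\<And>l. Y l \<inter> {..<n} = {}" "\<And>l. Y l \<subseteq> {..<N}"
    and "n \<le> N"
  shows "has_copy (Q n) (\<subseteq>) {A \<in> Q N. \<not> c A} \<or> (\<exists>T. blue_chain c Y {..<n} k T)"
proof (rule disjCI)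
  let ?G = "\<lambda>S i. \<exists>T. blue_chain c Y S i T"
  assume "\<not> ?G {..<n} k"
  then have no_chain: "\<not> ?G S k" if "S \<subseteq> {..<n}" for S
    using that blue_chain_superset[of c Y S k] by blast
  define h where "h S = (LEAST i. \<not> ?G S i)" for S
  define f where "f S = S \<union> Y (h S)" for S
  have h: "h S \<le> k" "\<not> ?G S (h S)" if "S \<subseteq> {..<n}" for S
  proof -
    from no_chain[OF that] show "h S \<le> k"
      unfolding h_def by (rule Least_le)
    from no_chain[OF that] show "\<not> ?G S (h S)"
      unfolding h_def by (rule LeastI)
  qed
  have h_mono: "h S \<le> h S'" if "S \<subseteq> S'" "S' \<subseteq> {..<n}" for S S'
  proof -
    have "\<not> ?G S (h S')"
      using h(2)[OF that(2)] blue_chain_superset[OF _ that(1)] by blast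
    then show ?thesis
      unfolding h_def[of S] by (rule Least_le)
  qed
  have red: "\<not> c (f S)" if "S \<subseteq> {..<n}" for S
  proof
    assume blue: "c (f S)"
    show False
    proof (cases "h S")
      case 0
      with blue have "blue_chain c Y S 0 (\<lambda>_. S)"
        unfolding f_def by (intro blue_chain_0) simp
      with 0 h(2)[OF that] show False by auto
    next
      case (Suc m)
      then obtain T where "blue_chain c Y S m T"
        using not_less_Least[of m "\<lambda>i. \<not> ?G S i"] unfolding h_def by auto
      with blue Suc have "blue_chain c Y S (Suc m) (T(Suc m := S))"
        unfolding f_def by (intro blue_chain_Suc) simp_all
      with Suc h(2)[OF that] show False by auto
    qed
  qed
  have embedding: "S \<subseteq> S' \<longleftrightarrow> f S \<subseteq> f S'" if "S \<subseteq> {..<n}" "S' \<subseteq> {..<n}" for S S'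
  proof
    assume "S \<subseteq> S'"
    then show "f S \<subseteq> f S'"
      unfolding f_def using monoD[OF Y(1) h_mono[OF \<open>S \<subseteq> S'\<close> that(2)]] by blast
  next
    assume "f S \<subseteq> f S'"
    then show "S \<subseteq> S'"
      unfolding f_def using that Y(2)[of "h S"] Y(2)[of "h S'"] by blast
  qed
  show "has_copy (Q n) (\<subseteq>) {A \<in> Q N. \<not> c A}"
    unfolding has_copy_def
  proof (intro exI conjI)
    show "inj_on f (Q n)"
      unfolding inj_on_def Q_def using embedding by (metis PowD subset_antisym subset_refl)
    show "f ` Q n \<subseteq> {A \<in> Q N. \<not> c A}"
      using red Y(3) \<open>n \<le> N\<close> unfolding Q_def f_def by fastforce
    show "\<forall>x\<in>Q n. \<forall>y\<in>Q n. x \<subseteq> y \<longleftrightarrow> f x \<subseteq> f y"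
      using embedding unfolding Q_def by blast
  qed
qed

section \<open>Chains of prefixes of permutations\<close>

definition shifted_prefix :: "nat \<Rightarrow> nat list \<Rightarrow> nat \<Rightarrow> nat set" where
  "shifted_prefix n \<pi> i = (+) n ` set (take i \<pi>)"

lemma shifted_prefix_0 [simp]: "shifted_prefix n \<pi> 0 = {}"
  unfolding shifted_prefix_def by simp

lemma mono_shifted_prefix: "mono (shifted_prefix n \<pi>)"
  unfolding shifted_prefix_def by (intro monoI image_mono set_take_subset_set_take)

lemma shifted_prefix_disjoint: "shifted_prefix n \<pi> i \<inter> {..<n} = {}"
  unfolding shifted_prefix_def by auto

lemma shifted_prefix_subset: "set \<pi> \<subseteq> {..<k} \<Longrightarrow> shifted_prefix n \<pi> i \<subseteq> {..<n + k}"
  unfolding shifted_prefix_def using set_take_subset by fastforce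

lemma shifted_prefix_length: "shifted_prefix n \<pi> (length \<pi>) = (+) n ` set \<pi>"
  unfolding shifted_prefix_def by simp

lemma shift_mem_union_shifted_prefix:
  "S \<subseteq> {..<n} \<Longrightarrow> n + x \<in> S \<union> shifted_prefix n \<pi> i \<longleftrightarrow> x \<in> set (take i \<pi>)"
  unfolding shifted_prefix_def by auto

lemma nth_mem_take_iff:
  assumes "distinct xs" "i < length xs"
  shows "xs ! i \<in> set (take m xs) \<longleftrightarrow> i < m"
proof
  assume "xs ! i \<in> set (take m xs)"
  then obtain l where "l < length xs" "l < m" "xs ! l = xs ! i"
    by (auto simp: in_set_conv_nth)
  with assms show "i < m"
    using nth_eq_iff_index_eq by metis
next
  assume "i < m"
  with assms(2) show "xs ! i \<in> set (take m xs)"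
    by (metis in_set_conv_nth length_take min_less_iff_conj nth_take)
qed

definition ascents :: "'a::linorder list \<Rightarrow> nat set" where
  "ascents xs = {i. Suc i < length xs \<and> xs ! i < xs ! Suc i}"

lemma ascents_subset: "ascents xs \<subseteq> {..<length xs}"
  unfolding ascents_def by auto

lemma index_after_common_prefix:
  assumes "distinct ys" "take j xs = take j ys" "xs ! j \<noteq> ys ! j" "xs ! p = ys ! j" "j < length ys"
  shows "j < p"
proof (rule ccontr)
  assume "\<not> j < p"
  then have "p < j"
    using assms(3,4) by (cases "p = j") auto
  then have "xs ! p = ys ! p"
    using assms(2) by (metis nth_take)
  with assms(1,4,5) \<open>p < j\<close> show False
    using nth_eq_iff_index_eq by fastforce
qed

text \<open>Two distinct permutations with the same ascents differ first at a position \<open>j\<close> whose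
  entry in one of them reappears at least two places later in the other: otherwise the
  entries at \<open>j\<close> and \<open>j + 1\<close> are swapped, turning an ascent at \<open>j\<close> into a descent.\<close>

lemma distinct_lists_first_difference:
  fixes \<pi> \<sigma> :: "'a::linorder list"
  assumes "distinct \<pi>" "distinct \<sigma>" "set \<pi> = set \<sigma>" "\<pi> \<noteq> \<sigma>" "ascents \<pi> = ascents \<sigma>"
  obtains j p where "take j \<pi> = take j \<sigma>" "\<sigma> ! j = \<pi> ! p" "j + 2 \<le> p" "p < length \<pi>"
    | j p where "take j \<sigma> = take j \<pi>" "\<pi> ! j = \<sigma> ! p" "j + 2 \<le> p" "p < length \<sigma>"
proof -
  have len: "length \<pi> = length \<sigma>"
    using assms(1-3) distinct_card by metis
  then have "\<exists>i. i < length \<pi> \<and> \<pi> ! i \<noteq> \<sigma> ! i"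
    using assms(4) nth_equalityI by metis
  then obtain j where j: "j < length \<pi>" "\<pi> ! j \<noteq> \<sigma> ! j"
    and "\<forall>i<j. \<not> (i < length \<pi> \<and> \<pi> ! i \<noteq> \<sigma> ! i)"
    unfolding exists_least_iff[of "\<lambda>i. i < length \<pi> \<and> \<pi> ! i \<noteq> \<sigma> ! i"] by blast
  then have before: "\<pi> ! i = \<sigma> ! i" if "i < j" for i
    using that by auto
  have prefix: "take j \<pi> = take j \<sigma>"
    using len j(1) before by (intro nth_equalityI) auto
  obtain p where p: "p < length \<pi>" "\<pi> ! p = \<sigma> ! j"
    using assms(3) j(1) len by (metis in_set_conv_nth nth_mem)
  obtain q where q: "q < length \<sigma>" "\<sigma> ! q = \<pi> ! j"
    using assms(3) j(1) by (metis in_set_conv_nth nth_mem)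
  have "j < p"
    using index_after_common_prefix[OF assms(2) prefix j(2) p(2)] j(1) len by simp
  moreover have "j < q"
    using index_after_common_prefix[OF assms(1) prefix[symmetric] j(2)[symmetric] q(2) j(1)] .
  moreover have "\<not> (p = Suc j \<and> q = Suc j)"
  proof
    assume "p = Suc j \<and> q = Suc j"
    then have "j \<in> ascents \<pi> \<longleftrightarrow> \<pi> ! j < \<sigma> ! j" "j \<in> ascents \<sigma> \<longleftrightarrow> \<sigma> ! j < \<pi> ! j"
      using p q len unfolding ascents_def by auto
    with assms(5) j(2) show False
      by auto
  qed
  ultimately consider "j + 2 \<le> p" | "j + 2 \<le> q"
    by linarith
  then show thesis
  proof cases
    case 1
    show thesis
      by (rule that(1)[OF prefix p(2)[symmetric] 1 p(1)])
  next
    case 2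
    show thesis
      by (rule that(2)[OF prefix[symmetric] q(2)[symmetric] 2 q(1)])
  qed
qed

section \<open>A blue \<open>SD\<^sub>1\<^sub>,\<^sub>2\<close> from two permutations\<close>

text \<open>The copy consists of \<open>T\<^sub>0\<close>, \<open>T\<^sub>k \<union> Y\<pi>\<^sub>k\<close>, the chain \<open>T\<^sub>j\<^sub>+\<^sub>1 \<union> Y\<pi>\<^sub>j\<^sub>+\<^sub>1 \<subseteq> T\<^sub>j\<^sub>+\<^sub>2 \<union> Y\<pi>\<^sub>j\<^sub>+\<^sub>2\<close>
  and the set \<open>T'\<^sub>j\<^sub>+\<^sub>1 \<union> Y\<sigma>\<^sub>j\<^sub>+\<^sub>1\<close> of the other chain. The latter is incomparable to the
  \<open>\<pi>\<close>-chain because it contains the coordinate of \<open>\<sigma>!j = \<pi>!p\<close>, which enters the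
  \<open>\<pi>\<close>-prefixes only after step \<open>j + 2\<close>, but lacks that of \<open>\<pi>!j\<close>.\<close>

lemma has_copy_SD12_from_chains:
  assumes \<pi>: "\<pi> \<in> permutations_of_set {..<k}" and \<sigma>: "\<sigma> \<in> permutations_of_set {..<k}"
    and prefix: "take j \<pi> = take j \<sigma>" and far: "\<sigma> ! j = \<pi> ! p" "j + 2 \<le> p" "p < k"
    and T: "blue_chain c (shifted_prefix n \<pi>) {..<n} k T"
    and T': "blue_chain c (shifted_prefix n \<sigma>) {..<n} k T'"
    and ends: "T' 0 = T 0" "T' k = T k"
  shows "has_copy (SD_carrier 1 2) SD_le {A \<in> Q (n + k). c A}"
proof -
  let ?Y = "shifted_prefix n \<pi>" and ?Y' = "shifted_prefix n \<sigma>"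
  have set: "set \<pi> = {..<k}" "set \<sigma> = {..<k}" and dist: "distinct \<pi>" "distinct \<sigma>"
    using \<pi> \<sigma> by (auto dest: permutations_of_setD)
  have len: "length \<pi> = k" "length \<sigma> = k"
    using \<pi> \<sigma> by (auto dest: length_finite_permutations_of_set)
  have below: "T l \<subseteq> {..<n}" "T' l \<subseteq> {..<n}" if "l \<le> k" for l
    using T T' that unfolding blue_chain_def by auto
  define B L R0 R1 Top where "B = T 0" and "L = T' (j + 1) \<union> ?Y' (j + 1)"
    and "R0 = T (j + 1) \<union> ?Y (j + 1)" and "R1 = T (j + 2) \<union> ?Y (j + 2)" and "Top = T k \<union> ?Y k"
  have mem: "n + x \<in> T l \<union> ?Y l \<longleftrightarrow> x \<in> set (take l \<pi>)"
    "n + x \<in> T' l \<union> ?Y' l \<longleftrightarrow> x \<in> set (take l \<sigma>)" if "l \<le> k" for x l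
    using shift_mem_union_shifted_prefix below[OF that] by auto
  have take_\<pi>: "\<pi> ! i \<in> set (take l \<pi>) \<longleftrightarrow> i < l" if "i < k" for i l
    using nth_mem_take_iff dist(1) len(1) that by auto
  have take_\<sigma>: "set (take (j + 1) \<sigma>) = insert (\<pi> ! p) (set (take j \<pi>))"
    using prefix far len by (simp add: take_Suc_conv_app_nth)
  have "\<pi> ! j \<noteq> \<pi> ! p"
    using dist(1) len(1) far nth_eq_iff_index_eq by fastforce
  then have "\<pi> ! j \<notin> set (take (j + 1) \<sigma>)"
    using take_\<sigma> take_\<pi> far by simp
  then have "n + \<pi> ! j \<in> R0 - L"
    unfolding R0_def L_def using mem take_\<pi> far by simp
  moreover have "n + \<pi> ! p \<in> L - R1"
    unfolding L_def R1_def using mem take_\<pi> take_\<sigma> far by simp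
  moreover have "n + \<pi> ! (j + 1) \<in> R1 - R0"
    unfolding R1_def R0_def using mem take_\<pi> far by simp
  ultimately have "\<not> L \<subseteq> R1" "\<not> R0 \<subseteq> L" "\<not> R1 \<subseteq> R0"
    by blast+
  moreover have "B \<subseteq> L" "B \<subseteq> R0" "R0 \<subseteq> R1" "R1 \<subseteq> Top"
  proof -
    have "T 0 \<subseteq> T (j + 1)" "T (j + 1) \<subseteq> T (j + 2)" "T (j + 2) \<subseteq> T k" "T' 0 \<subseteq> T' (j + 1)"
      using blue_chain_mono[OF T] blue_chain_mono[OF T'] far by simp_all
    moreover have "?Y (j + 1) \<subseteq> ?Y (j + 2)" "?Y (j + 2) \<subseteq> ?Y k"
      using monoD[OF mono_shifted_prefix] far by simp_all
    ultimately show "B \<subseteq> L" "B \<subseteq> R0" "R0 \<subseteq> R1" "R1 \<subseteq> Top"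
      unfolding B_def L_def R0_def R1_def Top_def using ends(1) by auto
  qed
  moreover have "L \<subseteq> Top"
  proof -
    have "T' (j + 1) \<subseteq> T k"
      using blue_chain_mono[OF T', of "j + 1" k] ends(2) far by simp
    moreover have "?Y' (j + 1) \<subseteq> ?Y' k"
      using monoD[OF mono_shifted_prefix] far by simp
    moreover have "?Y' k = ?Y k"
      using shifted_prefix_length[of n \<sigma>] shifted_prefix_length[of n \<pi>] set len by simp
    ultimately show ?thesis
      unfolding L_def Top_def by auto
  qed
  moreover have "{B, L, R0, R1, Top} \<subseteq> {A \<in> Q (n + k). c A}"
  proof -
    have "T l \<union> ?Y l \<in> {A \<in> Q (n + k). c A}" "T' l \<union> ?Y' l \<in> {A \<in> Q (n + k). c A}"
      if "l \<le> k" for l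
    proof -
      have "T l \<subseteq> {..<n + k}" "T' l \<subseteq> {..<n + k}"
        using below[OF that] by auto
      then show "T l \<union> ?Y l \<in> {A \<in> Q (n + k). c A}" "T' l \<union> ?Y' l \<in> {A \<in> Q (n + k). c A}"
        using T T' that shifted_prefix_subset[of \<pi> k n l] shifted_prefix_subset[of \<sigma> k n l] set
        unfolding blue_chain_def Q_def by auto
    qed
    from this(1)[of 0] this(1)[of "j + 1"] this(2)[of "j + 1"] this(1)[of "j + 2"] this(1)[of k]
    show ?thesis
      unfolding B_def L_def R0_def R1_def Top_def using far by simp
  qed
  ultimately show ?thesis
    by (intro has_copy_SD12I) assumption+
qed

lemma ramsey_prop_SD12_cube:
  assumes "2 ^ k * 4 ^ n < (fact k :: nat)"
  shows "ramsey_prop (SD_carrier 1 2) SD_le (Q n) (\<subseteq>) (n + k)"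
  unfolding ramsey_prop_def
proof (intro allI disjCI)
  fix c :: "nat set \<Rightarrow> bool"
  assume no_red: "\<not> has_copy (Q n) (\<subseteq>) {A \<in> Q (n + k). \<not> c A}"
  define P where "P = permutations_of_set {..<k}"
  have "\<exists>T. blue_chain c (shifted_prefix n \<pi>) {..<n} k T" if "\<pi> \<in> P" for \<pi>
  proof -
    have "set \<pi> \<subseteq> {..<k}"
      using that unfolding P_def by (auto dest: permutations_of_setD)
    then have "has_copy (Q n) (\<subseteq>) {A \<in> Q (n + k). \<not> c A}
        \<or> (\<exists>T. blue_chain c (shifted_prefix n \<pi>) {..<n} k T)"
      by (intro red_cube_or_blue_chain mono_shifted_prefix shifted_prefix_disjoint
          shifted_prefix_subset) auto
    with no_red show ?thesis
      by blast
  qed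
  then obtain TT where TT: "\<And>\<pi>. \<pi> \<in> P \<Longrightarrow> blue_chain c (shifted_prefix n \<pi>) {..<n} k (TT \<pi>)"
    by metis
  define label where "label \<pi> = (ascents \<pi>, TT \<pi> 0, TT \<pi> k)" for \<pi>
  have "label ` P \<subseteq> Pow {..<k} \<times> Pow {..<n} \<times> Pow {..<n}"
    using TT ascents_subset unfolding label_def blue_chain_def P_def
    by (fastforce dest: length_finite_permutations_of_set)
  then have "card (label ` P) \<le> 2 ^ k * 4 ^ n"
    using card_mono[of "Pow {..<k} \<times> Pow {..<n} \<times> Pow {..<n}"]
    by (simp add: card_Pow card_cartesian_product power_mult_distrib[symmetric])
  also have "\<dots> < card P"
    using assms unfolding P_def by simp
  finally obtain \<pi> \<sigma> where \<pi>\<sigma>: "\<pi> \<in> P" "\<sigma> \<in> P" "\<pi> \<noteq> \<sigma>" "label \<pi> = label \<sigma>"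
    using pigeonhole unfolding inj_on_def by blast
  then have same: "ascents \<pi> = ascents \<sigma>" "TT \<sigma> 0 = TT \<pi> 0" "TT \<sigma> k = TT \<pi> k"
    unfolding label_def by auto
  have perms: "\<pi> \<in> permutations_of_set {..<k}" "\<sigma> \<in> permutations_of_set {..<k}"
    using \<pi>\<sigma> unfolding P_def by auto
  then have dist: "distinct \<pi>" "distinct \<sigma>" "set \<pi> = set \<sigma>"
    and len: "length \<pi> = k" "length \<sigma> = k"
    by (auto dest: permutations_of_setD length_finite_permutations_of_set)
  show "has_copy (SD_carrier 1 2) SD_le {A \<in> Q (n + k). c A}"
  proof (rule distinct_lists_first_difference[OF dist \<pi>\<sigma>(3) same(1)])
    fix j p
    assume "take j \<pi> = take j \<sigma>" "\<sigma> ! j = \<pi> ! p" "j + 2 \<le> p" "p < length \<pi>"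
    with len show ?thesis
      by (intro has_copy_SD12_from_chains[OF perms _ _ _ _ TT[OF \<pi>\<sigma>(1)] TT[OF \<pi>\<sigma>(2)] same(2,3)])
        simp_all
  next
    fix j p
    assume "take j \<sigma> = take j \<pi>" "\<pi> ! j = \<sigma> ! p" "j + 2 \<le> p" "p < length \<sigma>"
    with len show ?thesis
      by (intro has_copy_SD12_from_chains[OF perms(2,1) _ _ _ _ TT[OF \<pi>\<sigma>(2)] TT[OF \<pi>\<sigma>(1)]
            same(2,3)[symmetric]]) simp_all
  qed
qed

section \<open>Asymptotics\<close>

lemma power_div_fact_le_exp:
  fixes x :: real
  assumes "0 \<le> x"
  shows "x ^ k / fact k \<le> exp x"
proof -
  have series: "(\<lambda>n. x ^ n / fact n) sums exp x"
    using exp_converges[of x] by (simp add: divide_inverse mult.commute)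
  show ?thesis
    using sum_le_suminf[OF sums_summable[OF series], of "{k}"] sums_unique[OF series] assms by simp
qed

lemma two_power_mult_four_power_less_fact:
  assumes x: "2 * exp 1 \<le> x" "x \<le> real k"
    and large: "2 * real n * ln 2 < x * ln (x / (2 * exp 1))"
  shows "2 ^ k * 4 ^ n < (fact k :: nat)"
proof -
  have x_pos: "0 < x"
    using x(1) exp_gt_zero[of 1] by linarith
  have "ln (x / (2 * exp 1)) \<le> ln (real k / (2 * exp 1))"
    using x x_pos by (subst ln_le_cancel_iff) (auto intro: divide_right_mono)
  then have k_large: "x * ln (x / (2 * exp 1)) \<le> real k * ln (real k / (2 * exp 1))"
    using x by (intro mult_mono) auto
  have "real (4 ^ n) = exp (real (2 * n) * ln 2)"
    unfolding exp_of_nat_mult by (simp add: power_mult)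
  also have "\<dots> < exp (real k * ln (real k / (2 * exp 1)))"
    using large k_large by simp
  also have "\<dots> = (real k / (2 * exp 1)) ^ k"
    using x x_pos by (simp add: exp_of_nat_mult)
  finally have "real (2 ^ k * 4 ^ n) < real k ^ k / exp (real k)"
    by (simp add: power_divide power_mult_distrib exp_of_nat_mult[symmetric] field_simps)
  also have "\<dots> \<le> fact k"
    using power_div_fact_le_exp[of "real k" k] by (simp add: field_simps)
  finally show ?thesis
    by (metis of_nat_fact of_nat_less_iff)
qed

text \<open>The choice \<open>k = \<lceil>(2 + \<epsilon>/2) n / log n\<rceil>\<close> works because \<open>(k/2e)\<^sup>k\<close> grows like
  \<open>2\<^bsup>(2 + \<epsilon>/2) n (1 - o(1))\<^esup>\<close>.\<close>

lemma eventually_fact_large: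
  fixes \<epsilon> :: real
  assumes "\<epsilon> > 0"
  shows "\<forall>\<^sub>F n in sequentially. \<exists>k. 2 ^ k * 4 ^ n < (fact k :: nat)
           \<and> real (n + k) \<le> real n + (2 + \<epsilon>) * real n / log 2 (real n)"
proof -
  define x where "x r = (2 + \<epsilon> / 2) * r / log 2 r" for r :: real
  have "\<forall>\<^sub>F r in at_top. 2 * exp 1 \<le> x r \<and> 2 * r * ln 2 < x r * ln (x r / (2 * exp 1))
          \<and> x r + 1 \<le> (2 + \<epsilon>) * r / log 2 r"
    unfolding x_def using assms by (intro eventually_conj; real_asymp)
  then have "\<forall>\<^sub>F n in sequentially. 2 * exp 1 \<le> x (real n)
          \<and> 2 * real n * ln 2 < x (real n) * ln (x (real n) / (2 * exp 1))
          \<and> x (real n) + 1 \<le> (2 + \<epsilon>) * real n / log 2 (real n)"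
    by (rule eventually_compose_filterlim[OF _ filterlim_real_sequentially])
  then show ?thesis
  proof (rule eventually_mono)
    fix n
    assume n: "2 * exp 1 \<le> x (real n) \<and> 2 * real n * ln 2 < x (real n) * ln (x (real n) / (2 * exp 1))
          \<and> x (real n) + 1 \<le> (2 + \<epsilon>) * real n / log 2 (real n)"
    define k where "k = nat \<lceil>x (real n)\<rceil>"
    have "x (real n) \<ge> 0"
      using n exp_gt_zero[of 1] by linarith
    then have "x (real n) \<le> real k" "real k < x (real n) + 1"
      unfolding k_def by linarith+
    with n show "\<exists>k. 2 ^ k * 4 ^ n < (fact k :: nat) \<and> real (n + k) \<le> real n + (2 + \<epsilon>) * real n / log 2 (real n)"
      using two_power_mult_four_power_less_fact[of "x (real n)" k n] by force
  qed
qed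

theorem corollary4:
  fixes \<epsilon> :: real
  assumes "\<epsilon> > 0"
  shows "\<exists>n0. \<forall>n \<ge> n0.
           (\<exists>N. ramsey_prop J_carrier J_le (Q n) (\<subseteq>) N) \<and>
           (\<exists>N. ramsey_prop (SD_carrier 1 2) SD_le (Q n) (\<subseteq>) N) \<and>
           poset_ramsey J_carrier J_le (Q n) (\<subseteq>)
             \<le> poset_ramsey (SD_carrier 1 2) SD_le (Q n) (\<subseteq>) \<and>
           real (poset_ramsey (SD_carrier 1 2) SD_le (Q n) (\<subseteq>))
             \<le> real n + (2 + \<epsilon>) * real n / log 2 (real n)"
proof -
  obtain n0 where n0: "\<And>n. n \<ge> n0 \<Longrightarrow> \<exists>k. 2 ^ k * 4 ^ n < (fact k :: nat)
      \<and> real (n + k) \<le> real n + (2 + \<epsilon>) * real n / log 2 (real n)"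
    using eventually_fact_large[OF assms] unfolding eventually_sequentially by blast
  show ?thesis (is "\<exists>n0. \<forall>n \<ge> n0. ?P n")
  proof (intro exI allI impI)
    fix n
    assume "n \<ge> n0"
    then obtain k where k: "2 ^ k * 4 ^ n < (fact k :: nat)"
      "real (n + k) \<le> real n + (2 + \<epsilon>) * real n / log 2 (real n)"
      using n0 by blast
    have SD: "ramsey_prop (SD_carrier 1 2) SD_le (Q n) (\<subseteq>) (n + k)"
      using ramsey_prop_SD12_cube[OF k(1)] .
    then have "real (poset_ramsey (SD_carrier 1 2) SD_le (Q n) (\<subseteq>)) \<le> real (n + k)"
      using poset_ramsey_le of_nat_mono by blast
    with k(2) SD ramsey_prop_J_if_SD12[OF SD] poset_ramsey_mono[OF ramsey_prop_J_if_SD12 SD]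
    show "?P n"
      by auto
  qed
qed

end
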